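(* Let $(x_n,y_n)_{n\in\mathbb Z}$ and $(x'_n,y'_n)_{n\in\mathbb Z}$ be two elliptic sequences in general position on the same biquadratic polynomial $F$, let $A=y'_{-1}$, and let $f$ be a function defined on $\{x_n:n\ge0\}$ satisfying $(\mathcal Df)(y_n)=\dfrac{Y_2(y_n)}{y_n-A}$ for all $n\ge0$. Assume $C_{m,0,0}\ne0$ for all $m\ge1$. Put $c_0=f(x_0)$ and $c_m=\dfrac{y_{m-1}-y'_{m-1}}{C_{m,0,0}}$ for $m\ge1$. Then for every $N\ge0$ the partial sum $$S_N(x)=\sum_{m=0}^Nc_m\frac{(x-x_0)\cdots(x-x_{m-1})}{(x-x'_0)\cdots(x-x'_{m-1})}$$ satisfies $S_N(x_n)=f(x_n)$ for $n=0,1,\dots,N$; i.e. $f(x)=\sum_{m\ge0}c_m\frac{(x-x_0)\cdots(x-x_{m-1})}{(x-x'_0)\cdots(x-x'_{m-1})}$ as an interpolatory expansion.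
   Context: $F(x,y)=\sum_{i,j=0}^2c_{i,j}x^iy^j=Y_0(y)+xY_1(y)+x^2Y_2(y)=X_0(x)+yX_1(x)+y^2X_2(x)$. An elliptic sequence on $F$ is $(x_n,y_n)_{n\in\mathbb Z}$ such that for every $n$, $x_n,x_{n+1}$ are the two roots of $F(\cdot,y_n)$ and $y_{n-1},y_n$ the two roots of $F(x_n,\cdot)$; general position means all $x_n,x'_n$ distinct, all $y_n,y'_n$ distinct, $X_2,Y_2$ nonvanishing there. $(\mathcal Df)(y_n)=\frac{f(x_{n+1})-f(x_n)}{x_{n+1}-x_n}$; for rational $f$, $(\mathcal Df)(y)=\frac{f(x^+)-f(x^-)}{x^+-x^-}$ with $x^\pm$ the roots of $F(x,y)=0$. $C_{m,0,0}$ is the constant such that $\mathcal D\Big[\frac{(x-x_0)\cdots(x-x_{m-1})}{(x-x'_0)\cdots(x-x'_{m-1})}\Big](y)=C_{m,0,0}Y_2(y)\frac{(y-y_0)\cdots(y-y_{m-2})}{(y-y'_{-1})(y-y'_0)\cdots(y-y'_{m-1})}$ (such a constant exists). Empty products equal $1$. *)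

theory Defs
  imports Complex_Main
begin

definition bq :: "(nat \<Rightarrow> nat \<Rightarrow> complex) \<Rightarrow> complex \<Rightarrow> complex \<Rightarrow> complex" where
  "bq c x y = (\<Sum>i\<le>2. \<Sum>j\<le>2. c i j * x ^ i * y ^ j)"

definition bqY2 :: "(nat \<Rightarrow> nat \<Rightarrow> complex) \<Rightarrow> complex \<Rightarrow> complex" where
  "bqY2 c y = (\<Sum>j\<le>2. c 2 j * y ^ j)"

definition bqX2 :: "(nat \<Rightarrow> nat \<Rightarrow> complex) \<Rightarrow> complex \<Rightarrow> complex" where
  "bqX2 c x = (\<Sum>i\<le>2. c i 2 * x ^ i)"

definition elliptic_seq ::
  "(nat \<Rightarrow> nat \<Rightarrow> complex) \<Rightarrow> (int \<Rightarrow> complex) \<Rightarrow> (int \<Rightarrow> complex) \<Rightarrow> bool" where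
  "elliptic_seq c xs ys \<longleftrightarrow>
     (\<forall>n x. bq c x (ys n) = bqY2 c (ys n) * (x - xs n) * (x - xs (n + 1))) \<and>
     (\<forall>n y. bq c (xs n) y = bqX2 c (xs n) * (y - ys (n - 1)) * (y - ys n))"

definition general_position ::
  "(nat \<Rightarrow> nat \<Rightarrow> complex) \<Rightarrow> (int \<Rightarrow> complex) \<Rightarrow> (int \<Rightarrow> complex)
     \<Rightarrow> (int \<Rightarrow> complex) \<Rightarrow> (int \<Rightarrow> complex) \<Rightarrow> bool" where
  "general_position c xs ys xs' ys' \<longleftrightarrow>
     inj xs \<and> inj xs' \<and> (\<forall>n m. xs n \<noteq> xs' m) \<and>
     inj ys \<and> inj ys' \<and> (\<forall>n m. ys n \<noteq> ys' m) \<and>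
     (\<forall>n. bqX2 c (xs n) \<noteq> 0 \<and> bqX2 c (xs' n) \<noteq> 0 \<and>
          bqY2 c (ys n) \<noteq> 0 \<and> bqY2 c (ys' n) \<noteq> 0)"

definition ratb :: "(int \<Rightarrow> complex) \<Rightarrow> (int \<Rightarrow> complex) \<Rightarrow> nat \<Rightarrow> complex \<Rightarrow> complex" where
  "ratb xs xs' m x = (\<Prod>k<m. x - xs (int k)) / (\<Prod>k<m. x - xs' (int k))"

text \<open>The constant C_{m,0,0}: the constant c such that, as rational functions in y,
  D[ratb m](y) = c * Y_2(y) * (y-y_0)...(y-y_{m-2}) / ((y-y'_{-1})(y-y'_0)...(y-y'_{m-1})),
  where (D g)(y) = (g(x+) - g(x-))/(x+ - x-) with x+, x- the two roots of F(.,y).\<close>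
definition C_const ::
  "(nat \<Rightarrow> nat \<Rightarrow> complex) \<Rightarrow> (int \<Rightarrow> complex) \<Rightarrow> (int \<Rightarrow> complex)
     \<Rightarrow> (int \<Rightarrow> complex) \<Rightarrow> (int \<Rightarrow> complex) \<Rightarrow> nat \<Rightarrow> complex" where
  "C_const c xs ys xs' ys' m =
     (THE C. \<forall>y xp xm.
        bqY2 c y \<noteq> 0 \<longrightarrow> xp \<noteq> xm \<longrightarrow>
        (\<forall>x. bq c x y = bqY2 c y * (x - xp) * (x - xm)) \<longrightarrow>
        (\<forall>k<m. xp \<noteq> xs' (int k) \<and> xm \<noteq> xs' (int k)) \<longrightarrow>
        (\<forall>k\<in>{-1..int m - 1}. y \<noteq> ys' k) \<longrightarrow>
        (ratb xs xs' m xp - ratb xs xs' m xm) / (xp - xm) =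
          C * bqY2 c y * (\<Prod>k\<in>{0..int m - 2}. y - ys k)
            / (\<Prod>k\<in>{-1..int m - 1}. y - ys' k))"

end

theory Submission
  imports Defs "HOL-Computational_Algebra.Polynomial"
begin

text \<open>
  The constant C_{m,0,0} exists because of a Bezoutian argument. On a fibre
  F(x, y) = Y_2(y) (x - a) (x - b), write the m-th basis function as P/Q. The quantity
  Y_2(y)^(m-1) (P(a) Q(b) - P(b) Q(a)) / (a - b) is symmetric in a, b, hence a polynomial in y of
  degree at most 2m - 2. It vanishes at y_k and y'_k for k < m - 1, where both roots are nodes of
  P resp. Q, so it is a constant times the product of these linear factors; and Y_2(y)^m Q(a) Q(b)
  is a product of the values F(x'_k, y) = X_2(x'_k) (y - y'_(k-1)) (y - y'_k).

  For the expansion, the m-th basis function vanishes at x_0, ..., x_(m-1), so S_N(x_n) = S_n(x_n).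
  At y_n the divided differences c_m D[...](y_n) are consecutive differences of
  prod_(k<j) (y_n - y_k) / ((y_n - A) prod_(k<j) (y_n - y'_k)), so D S_n(y_n) telescopes to
  Y_2(y_n) / (y_n - A) = (D f)(y_n), the last product containing the factor y_n - y_n.
\<close>


section \<open>Bezoutians of a quadratic pencil\<close>

definition quadratic_roots ::
  "'a::comm_ring_1 poly \<Rightarrow> 'a poly \<Rightarrow> 'a poly \<Rightarrow> 'a \<Rightarrow> 'a \<Rightarrow> 'a \<Rightarrow> bool" where
  "quadratic_roots p0 p1 p2 y a b \<longleftrightarrow>
     poly p1 y = - poly p2 y * (a + b) \<and> poly p0 y = poly p2 y * a * b"

fun complete_sym_poly ::
  "'a::comm_ring_1 poly \<Rightarrow> 'a poly \<Rightarrow> 'a poly \<Rightarrow> nat \<Rightarrow> 'a poly" where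
  "complete_sym_poly p0 p1 p2 0 = 1"
| "complete_sym_poly p0 p1 p2 (Suc 0) = - p1"
| "complete_sym_poly p0 p1 p2 (Suc (Suc k)) =
     - p1 * complete_sym_poly p0 p1 p2 (Suc k) - p0 * p2 * complete_sym_poly p0 p1 p2 k"

lemma degree_complete_sym_poly:
  assumes "degree p0 \<le> d" "degree p1 \<le> d" "degree p2 \<le> d"
  shows "degree (complete_sym_poly p0 p1 p2 k) \<le> d * k"
  using assms
proof (induction p0 p1 p2 k rule: complete_sym_poly.induct)
  case (3 p0 p1 p2 k)
  have "degree (- p1 * complete_sym_poly p0 p1 p2 (Suc k)) \<le> d + d * Suc k"
    by (rule order_trans[OF degree_mult_le add_mono]) (use 3 in simp_all)
  moreover have "degree (p0 * p2 * complete_sym_poly p0 p1 p2 k) \<le> (d + d) + d * k"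
    by (intro order_trans[OF degree_mult_le add_mono] 3(2)) (use 3 in simp_all)
  ultimately show ?case by (auto intro: degree_diff_le simp: algebra_simps)
qed simp_all

lemma poly_complete_sym_poly:
  assumes "quadratic_roots p0 p1 p2 y a b"
  shows "(a - b) * poly (complete_sym_poly p0 p1 p2 k) y = poly p2 y ^ k * (a ^ Suc k - b ^ Suc k)"
  using assms
proof (induction p0 p1 p2 k rule: complete_sym_poly.induct)
  case (2 p0 p1 p2)
  then have "(a - b) * poly (- p1) y = (a - b) * (poly p2 y * (a + b))"
    by (simp add: quadratic_roots_def)
  then show ?case by (simp add: algebra_simps power2_eq_square)
next
  case (3 p0 p1 p2 k)
  let ?h = "complete_sym_poly p0 p1 p2" and ?Y = "poly p2 y"
  have "(a - b) * poly (?h (Suc (Suc k))) y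
      = - poly p1 y * ((a - b) * poly (?h (Suc k)) y) - poly p0 y * ?Y * ((a - b) * poly (?h k) y)"
    by (simp add: algebra_simps)
  also have "\<dots> = ?Y * (a + b) * (?Y ^ Suc k * (a ^ Suc (Suc k) - b ^ Suc (Suc k)))
      - ?Y * a * b * ?Y * (?Y ^ k * (a ^ Suc k - b ^ Suc k))"
    using 3 by (simp add: quadratic_roots_def)
  also have "\<dots> = ?Y ^ Suc (Suc k) * (a ^ Suc (Suc (Suc k)) - b ^ Suc (Suc (Suc k)))"
    by (simp add: algebra_simps)
  finally show ?case .
qed simp

text \<open>For j < i one has a^i b^j - a^j b^i = (a b)^j (a - b) h_(i-j-1)(a, b), where h_k is the
  complete homogeneous symmetric polynomial of degree k; substituting a + b = -p1/p2 and
  a b = p0/p2 and clearing denominators makes this a polynomial in y.\<close>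

definition antisym_poly ::
  "'a::comm_ring_1 poly \<Rightarrow> 'a poly \<Rightarrow> 'a poly \<Rightarrow> nat \<Rightarrow> nat \<Rightarrow> nat \<Rightarrow> 'a poly" where
  "antisym_poly p0 p1 p2 m i j =
     (if j < i then p0 ^ j * p2 ^ (m - i) * complete_sym_poly p0 p1 p2 (i - j - 1)
      else if i < j then - (p0 ^ i * p2 ^ (m - j) * complete_sym_poly p0 p1 p2 (j - i - 1))
      else 0)"

lemma poly_antisym_poly_less:
  assumes "quadratic_roots p0 p1 p2 y a b" "j < i" "i \<le> m"
  shows "(a - b) * poly (p0 ^ j * p2 ^ (m - i) * complete_sym_poly p0 p1 p2 (i - j - 1)) y
         = poly p2 y ^ (m - 1) * (a ^ i * b ^ j - a ^ j * b ^ i)"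
proof -
  obtain d e where i: "i = j + d + 1" and m: "m = i + e"
    using assms(2,3) by (metis add.commute le_Suc_ex less_imp_Suc_add Suc_eq_plus1)
  let ?Y = "poly p2 y"
  have "(a - b) * poly (p0 ^ j * p2 ^ (m - i) * complete_sym_poly p0 p1 p2 (i - j - 1)) y
      = poly p0 y ^ j * ?Y ^ e * ((a - b) * poly (complete_sym_poly p0 p1 p2 d) y)"
    using i m by (simp add: algebra_simps)
  also have "\<dots> = (?Y * a * b) ^ j * ?Y ^ e * (?Y ^ d * (a ^ Suc d - b ^ Suc d))"
    using assms(1) by (simp add: poly_complete_sym_poly quadratic_roots_def)
  also have "\<dots> = ?Y ^ (m - 1) * (a ^ i * b ^ j - a ^ j * b ^ i)"
    using i m by (simp add: algebra_simps power_add power_mult_distrib)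
  finally show ?thesis .
qed

lemma poly_antisym_poly:
  assumes "quadratic_roots p0 p1 p2 y a b" "i \<le> m" "j \<le> m"
  shows "(a - b) * poly (antisym_poly p0 p1 p2 m i j) y
         = poly p2 y ^ (m - 1) * (a ^ i * b ^ j - a ^ j * b ^ i)"
proof -
  consider "j < i" | "i < j" | "i = j" by linarith
  then show ?thesis
  proof cases
    case 1
    then show ?thesis
      using poly_antisym_poly_less[OF assms(1) 1 assms(2)] by (simp add: antisym_poly_def)
  next
    case 2
    then show ?thesis
      using poly_antisym_poly_less[OF assms(1) 2 assms(3)]
      by (simp add: antisym_poly_def algebra_simps)
  qed (simp add: antisym_poly_def)
qed

lemma degree_antisym_poly:
  assumes "degree p0 \<le> d" "degree p1 \<le> d" "degree p2 \<le> d" "i \<le> m" "j \<le> m"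
  shows "degree (antisym_poly p0 p1 p2 m i j) \<le> d * (m - 1)"
proof -
  have "degree (p0 ^ l * p2 ^ (m - k) * complete_sym_poly p0 p1 p2 (k - l - 1)) \<le> d * (m - 1)"
    if "l < k" "k \<le> m" for k l
  proof -
    have "degree (p0 ^ l * p2 ^ (m - k) * complete_sym_poly p0 p1 p2 (k - l - 1))
        \<le> d * l + d * (m - k) + d * (k - l - 1)"
      by (intro order_trans[OF degree_mult_le add_mono] order_trans[OF degree_power_le]
          degree_complete_sym_poly) (use assms in \<open>simp_all add: mult.commute\<close>)
    also have "\<dots> = d * (m - 1)"
      using that by (simp flip: distrib_left)
    finally show ?thesis .
  qed
  then show ?thesis using assms(4,5) by (auto simp: antisym_poly_def)
qed

lemma poly_eq_sum_coeffs:
  fixes p :: "'a::comm_semiring_1 poly"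
  assumes "degree p \<le> n"
  shows "poly p x = (\<Sum>i\<le>n. coeff p i * x ^ i)"
proof -
  have "poly p x = poly (\<Sum>i\<le>n. monom (coeff p i) i) x"
    by (simp only: poly_as_sum_of_monoms'[OF assms])
  then show ?thesis by (simp add: poly_sum poly_monom)
qed

definition bezout_poly ::
  "'a::comm_ring_1 poly \<Rightarrow> 'a poly \<Rightarrow> 'a poly \<Rightarrow> nat \<Rightarrow> 'a poly \<Rightarrow> 'a poly \<Rightarrow> 'a poly" where
  "bezout_poly p0 p1 p2 m P Q =
     (\<Sum>i\<le>m. \<Sum>j\<le>m.
        smult (coeff P i * coeff Q j) (antisym_poly p0 p1 p2 m i j))"

lemma degree_bezout_poly:
  assumes "degree p0 \<le> d" "degree p1 \<le> d" "degree p2 \<le> d"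
  shows "degree (bezout_poly p0 p1 p2 m P Q) \<le> d * (m - 1)"
  unfolding bezout_poly_def
  by (intro degree_sum_le order_trans[OF degree_smult_le] degree_antisym_poly assms) auto

lemma poly_bezout_poly:
  assumes "quadratic_roots p0 p1 p2 y a b" "degree P \<le> m" "degree Q \<le> m"
  shows "(a - b) * poly (bezout_poly p0 p1 p2 m P Q) y
         = poly p2 y ^ (m - 1) * (poly P a * poly Q b - poly P b * poly Q a)"
proof -
  let ?p = "coeff P" and ?q = "coeff Q" and ?Y = "poly p2 y ^ (m - 1)"
  have "(a - b) * poly (bezout_poly p0 p1 p2 m P Q) y
      = (\<Sum>i\<le>m. \<Sum>j\<le>m. ?p i * ?q j * ((a - b) * poly (antisym_poly p0 p1 p2 m i j) y))"
    by (simp add: bezout_poly_def poly_sum sum_distrib_left algebra_simps)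
  also have "\<dots> = (\<Sum>i\<le>m. \<Sum>j\<le>m.
                      ?p i * ?q j * (?Y * (a ^ i * b ^ j - a ^ j * b ^ i)))"
    by (intro sum.cong refl) (simp add: poly_antisym_poly[OF assms(1)])
  also have "\<dots> = ?Y * ((\<Sum>i\<le>m. \<Sum>j\<le>m. ?p i * ?q j * (a ^ i * b ^ j))
                        - (\<Sum>i\<le>m. \<Sum>j\<le>m. ?p i * ?q j * (a ^ j * b ^ i)))"
    by (simp add: sum_distrib_left sum_subtractf algebra_simps)
  also have "(\<Sum>i\<le>m. \<Sum>j\<le>m. ?p i * ?q j * (a ^ i * b ^ j)) = poly P a * poly Q b"
    by (simp add: poly_eq_sum_coeffs[OF assms(2)] poly_eq_sum_coeffs[OF assms(3)]
        sum_product algebra_simps)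
  also have "(\<Sum>i\<le>m. \<Sum>j\<le>m. ?p i * ?q j * (a ^ j * b ^ i)) = poly P b * poly Q a"
    by (simp add: poly_eq_sum_coeffs[OF assms(2)] poly_eq_sum_coeffs[OF assms(3)]
        sum_product algebra_simps)
  finally show ?thesis .
qed

lemma poly_eq_smult_prod_roots:
  fixes p :: "'a::idom poly"
  assumes "finite Z" "degree p \<le> card Z" "\<And>z. z \<in> Z \<Longrightarrow> poly p z = 0"
  shows "poly p x = coeff p (card Z) * (\<Prod>z\<in>Z. x - z)"
proof -
  define q where "q = smult (coeff p (card Z)) (\<Prod>z\<in>Z. [:- z, 1:])"
  have deg: "degree (\<Prod>z\<in>Z. [:- z, 1:]) = card Z"
    by (simp add: degree_prod_eq_sum_degree)
  have monic: "coeff (\<Prod>z\<in>Z. [:- z, 1:]) (card Z) = 1"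
    using lead_coeff_prod[of "\<lambda>z. [:- z, 1:]" Z] by (simp only: deg) simp
  have "p = q"
  proof (rule poly_eqI_degree_lead_coeff[where n = "card Z" and A = Z])
    show "degree q \<le> card Z" using deg by (simp add: q_def)
    show "poly p z = poly q z" if "z \<in> Z" for z
      using that assms by (simp add: q_def poly_prod prod_zero_iff)
  qed (use assms monic in \<open>simp_all add: q_def\<close>)
  then have "poly p x = poly q x" by (simp only:)
  then show ?thesis by (simp add: q_def poly_prod)
qed


section \<open>The biquadratic and the basis functions\<close>

text \<open>Ycoeff c i is the paper's Y_i, so that F(x, y) = Y_0(y) + x Y_1(y) + x^2 Y_2(y).\<close>

definition Ycoeff :: "(nat \<Rightarrow> nat \<Rightarrow> complex) \<Rightarrow> nat \<Rightarrow> complex poly" where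
  "Ycoeff c i = [:c i 0, c i 1, c i 2:]"

lemma poly_Ycoeff: "poly (Ycoeff c i) y = (\<Sum>j\<le>2. c i j * y ^ j)"
  by (simp add: Ycoeff_def numeral_2_eq_2 algebra_simps)

lemma poly_Ycoeff_2: "poly (Ycoeff c 2) y = bqY2 c y"
  by (simp add: poly_Ycoeff bqY2_def)

lemma degree_Ycoeff: "degree (Ycoeff c i) \<le> 2"
  by (simp add: Ycoeff_def degree_pCons_eq_if)

lemma bq_eq_quadratic:
  "bq c x y = poly (Ycoeff c 0) y + poly (Ycoeff c 1) y * x + bqY2 c y * x ^ 2"
  by (simp add: bq_def bqY2_def poly_Ycoeff numeral_2_eq_2 algebra_simps)

lemma quadratic_roots_Ycoeff:
  assumes "\<forall>x. bq c x y = bqY2 c y * (x - a) * (x - b)"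
  shows "quadratic_roots (Ycoeff c 0) (Ycoeff c 1) (Ycoeff c 2) y a b"
proof -
  let ?A = "poly (Ycoeff c 0) y" and ?B = "poly (Ycoeff c 1) y" and ?Y = "bqY2 c y"
  have at0: "?A = ?Y * a * b"
    using spec[OF assms, of 0] unfolding bq_eq_quadratic by simp
  have at1: "?A + ?B + ?Y = ?Y * (1 - a) * (1 - b)"
    using spec[OF assms, of 1] by (simp add: bq_eq_quadratic)
  have at_minus1: "?A - ?B + ?Y = ?Y * (- 1 - a) * (- 1 - b)"
    using spec[OF assms, of "- 1"] by (simp add: bq_eq_quadratic)
  have "2 * ?B = (?A + ?B + ?Y) - (?A - ?B + ?Y)"
    by simp
  also have "\<dots> = 2 * (- ?Y * (a + b))"
    by (simp only: at1 at_minus1) (simp add: algebra_simps)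
  finally have "2 * ?B = 2 * (- ?Y * (a + b))" .
  then show ?thesis
    using at0 by (simp add: quadratic_roots_def poly_Ycoeff_2)
qed

definition node_poly :: "(int \<Rightarrow> complex) \<Rightarrow> nat \<Rightarrow> complex poly" where
  "node_poly xs m = (\<Prod>k<m. [:- xs (int k), 1:])"

lemma poly_node_poly: "poly (node_poly xs m) x = (\<Prod>k<m. x - xs (int k))"
  by (simp add: node_poly_def poly_prod)

lemma degree_node_poly: "degree (node_poly xs m) = m"
  by (simp add: node_poly_def degree_prod_eq_sum_degree)

definition ratb_bezoutian ::
  "(nat \<Rightarrow> nat \<Rightarrow> complex) \<Rightarrow> (int \<Rightarrow> complex) \<Rightarrow> (int \<Rightarrow> complex) \<Rightarrow> nat \<Rightarrow> complex poly" where
  "ratb_bezoutian c xs xs' m =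
     bezout_poly (Ycoeff c 0) (Ycoeff c 1) (Ycoeff c 2) m (node_poly xs m) (node_poly xs' m)"

lemma degree_ratb_bezoutian: "degree (ratb_bezoutian c xs xs' m) \<le> 2 * (m - 1)"
  unfolding ratb_bezoutian_def by (intro degree_bezout_poly degree_Ycoeff)

lemma poly_ratb_bezoutian:
  assumes "\<forall>x. bq c x y = bqY2 c y * (x - a) * (x - b)"
  shows "(a - b) * poly (ratb_bezoutian c xs xs' m) y
         = bqY2 c y ^ (m - 1) * (poly (node_poly xs m) a * poly (node_poly xs' m) b
                                 - poly (node_poly xs m) b * poly (node_poly xs' m) a)"
  using poly_bezout_poly[OF quadratic_roots_Ycoeff[OF assms]]
  by (simp add: ratb_bezoutian_def degree_node_poly poly_Ycoeff_2)

lemma ratb_divided_difference: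
  assumes fac: "\<forall>x. bq c x y = bqY2 c y * (x - a) * (x - b)"
    and "a \<noteq> b" "bqY2 c y \<noteq> 0" "\<forall>k<m. a \<noteq> xs' (int k) \<and> b \<noteq> xs' (int k)"
  shows "(ratb xs xs' m a - ratb xs xs' m b) / (a - b)
         = poly (ratb_bezoutian c xs xs' m) y * bqY2 c y
           / (bqY2 c y ^ m * (poly (node_poly xs' m) a * poly (node_poly xs' m) b))"
proof -
  let ?P = "poly (node_poly xs m)" and ?Q = "poly (node_poly xs' m)" and ?Y = "bqY2 c y"
  have Q: "?Q a \<noteq> 0" "?Q b \<noteq> 0"
    using assms(4) by (auto simp: poly_node_poly prod_zero_iff)
  have "?Y ^ m = ?Y * ?Y ^ (m - 1)" if "m \<noteq> 0"
    using that by (simp flip: power_Suc)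
  then have "?Y ^ m * (?Q a * ?Q b) * ((ratb xs xs' m a - ratb xs xs' m b) / (a - b))
      = ?Y * (?Y ^ (m - 1) * (?P a * ?Q b - ?P b * ?Q a)) / (a - b)"
    using Q assms(2) by (cases "m = 0") (auto simp: ratb_def poly_node_poly field_simps)
  also have "\<dots> = poly (ratb_bezoutian c xs xs' m) y * ?Y"
    by (subst poly_ratb_bezoutian[OF fac, symmetric]) (use assms(2) in simp)
  finally show ?thesis
    using Q assms(3) by (simp add: field_simps)
qed


section \<open>The constant C_{m,0,0}\<close>

definition C_const_identity ::
  "(nat \<Rightarrow> nat \<Rightarrow> complex) \<Rightarrow> (int \<Rightarrow> complex) \<Rightarrow> (int \<Rightarrow> complex)
     \<Rightarrow> (int \<Rightarrow> complex) \<Rightarrow> (int \<Rightarrow> complex) \<Rightarrow> nat \<Rightarrow> complex \<Rightarrow> bool" where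
  "C_const_identity c xs ys xs' ys' m C \<longleftrightarrow> (\<forall>y xp xm.
        bqY2 c y \<noteq> 0 \<longrightarrow> xp \<noteq> xm \<longrightarrow>
        (\<forall>x. bq c x y = bqY2 c y * (x - xp) * (x - xm)) \<longrightarrow>
        (\<forall>k<m. xp \<noteq> xs' (int k) \<and> xm \<noteq> xs' (int k)) \<longrightarrow>
        (\<forall>k\<in>{-1..int m - 1}. y \<noteq> ys' k) \<longrightarrow>
        (ratb xs xs' m xp - ratb xs xs' m xm) / (xp - xm) =
          C * bqY2 c y * (\<Prod>k\<in>{0..int m - 2}. y - ys k)
            / (\<Prod>k\<in>{-1..int m - 1}. y - ys' k))"

lemma C_const_eq_The:
  "C_const c xs ys xs' ys' m = (THE C. C_const_identity c xs ys xs' ys' m C)"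
  unfolding C_const_def C_const_identity_def by simp

lemma prod_int_atLeastAtMost: "(\<Prod>k\<in>{0..int n - 1}. g k) = (\<Prod>k<n. g (int k))"
proof -
  have "{0..int n - 1} = int ` {..<n}"
    by (auto simp: image_iff intro!: bexI[of _ "nat _"])
  then show ?thesis by (simp add: prod.reindex)
qed

lemma prod_C_numerator: "m \<ge> 1 \<Longrightarrow> (\<Prod>k\<in>{0..int m - 2}. g k) = (\<Prod>k<m - 1. g (int k))"
  using prod_int_atLeastAtMost[where n = "m - 1" and g = g]
  by (simp add: of_nat_diff algebra_simps)

lemma prod_C_denominator: "(\<Prod>k\<in>{-1..int m - 1}. g k) = g (- 1) * (\<Prod>k<m. g (int k))"
proof -
  have "{-1..int m - 1} = insert (- 1) {0..int m - 1}" by auto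
  then show ?thesis by (simp add: prod_int_atLeastAtMost)
qed

lemma prod_lessThan_Suc_int_shift:
  "(\<Prod>k<Suc n. g (int k - 1)) = g (- 1) * (\<Prod>k<n. g (int k))"
  by (subst prod.lessThan_Suc_shift) simp

lemma ratb_bezoutian_root:
  assumes "\<forall>x. bq c x y = bqY2 c y * (x - a) * (x - b)" "a \<noteq> b"
    and "(poly (node_poly xs m) a = 0 \<and> poly (node_poly xs m) b = 0)
         \<or> (poly (node_poly xs' m) a = 0 \<and> poly (node_poly xs' m) b = 0)"
  shows "poly (ratb_bezoutian c xs xs' m) y = 0"
  using poly_ratb_bezoutian[OF assms(1), of xs xs' m] assms(2,3) by auto

lemma node_poly_consecutive_roots:
  assumes "k + 1 < m"
  shows "poly (node_poly xs m) (xs (int k)) = 0 \<and> poly (node_poly xs m) (xs (int k + 1)) = 0"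
proof -
  have "xs (int k + 1) = xs (int (Suc k))" by (simp add: add.commute)
  then show ?thesis
    using assms by (auto simp: poly_node_poly prod_zero_iff simp del: of_nat_Suc)
qed

locale elliptic_pair =
  fixes c :: "nat \<Rightarrow> nat \<Rightarrow> complex" and xs ys xs' ys' :: "int \<Rightarrow> complex"
  assumes ell: "elliptic_seq c xs ys" and ell': "elliptic_seq c xs' ys'"
    and gp: "general_position c xs ys xs' ys'"
begin

lemma bq_at_ys: "bq c x (ys n) = bqY2 c (ys n) * (x - xs n) * (x - xs (n + 1))"
  and bq_at_ys': "bq c x (ys' n) = bqY2 c (ys' n) * (x - xs' n) * (x - xs' (n + 1))"
  and bq_at_xs': "bq c (xs' n) y = bqX2 c (xs' n) * (y - ys' (n - 1)) * (y - ys' n)"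
  using ell ell' unfolding elliptic_seq_def by blast+

lemma inj_xs: "inj xs" and inj_xs': "inj xs'" and xs_ne_xs': "xs n \<noteq> xs' k"
  and inj_ys: "inj ys" and inj_ys': "inj ys'" and ys_ne_ys': "ys n \<noteq> ys' k"
  and bqX2_xs'_nonzero: "bqX2 c (xs' n) \<noteq> 0" and bqY2_ys_nonzero: "bqY2 c (ys n) \<noteq> 0"
  using gp unfolding general_position_def by blast+

lemma xs_consecutive_ne: "xs n \<noteq> xs (n + 1)" and xs'_consecutive_ne: "xs' n \<noteq> xs' (n + 1)"
  using inj_xs inj_xs' by (auto dest: injD)

lemma ratb_bezoutian_vanishes:
  assumes "k < m - 1"
  shows "poly (ratb_bezoutian c xs xs' m) (ys (int k)) = 0"
    and "poly (ratb_bezoutian c xs xs' m) (ys' (int k)) = 0"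
proof -
  have "k + 1 < m" using assms by linarith
  note roots = node_poly_consecutive_roots[OF this]
  show "poly (ratb_bezoutian c xs xs' m) (ys (int k)) = 0"
    by (intro ratb_bezoutian_root[OF allI[OF bq_at_ys] xs_consecutive_ne]) (simp add: roots)
  show "poly (ratb_bezoutian c xs xs' m) (ys' (int k)) = 0"
    by (intro ratb_bezoutian_root[OF allI[OF bq_at_ys'] xs'_consecutive_ne]) (simp add: roots)
qed

lemma ratb_bezoutian_factor:
  "poly (ratb_bezoutian c xs xs' m) y
   = coeff (ratb_bezoutian c xs xs' m) (2 * (m - 1))
     * ((\<Prod>k<m - 1. y - ys (int k)) * (\<Prod>k<m - 1. y - ys' (int k)))"
proof -
  define Z where "Z = (\<lambda>k. ys (int k)) ` {..<m - 1}"
  define Z' where "Z' = (\<lambda>k. ys' (int k)) ` {..<m - 1}"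
  have inj: "inj_on (\<lambda>k. ys (int k)) A" "inj_on (\<lambda>k. ys' (int k)) A" for A
    by (auto simp: inj_on_def dest: injD[OF inj_ys] injD[OF inj_ys'])
  have disj: "Z \<inter> Z' = {}"
    using ys_ne_ys' by (auto simp: Z_def Z'_def)
  have card: "card (Z \<union> Z') = 2 * (m - 1)"
    using disj by (simp add: card_Un_disjoint Z_def Z'_def card_image inj)
  have "poly (ratb_bezoutian c xs xs' m) z = 0" if "z \<in> Z \<union> Z'" for z
    using that ratb_bezoutian_vanishes by (auto simp: Z_def Z'_def)
  then have "poly (ratb_bezoutian c xs xs' m) y
      = coeff (ratb_bezoutian c xs xs' m) (2 * (m - 1)) * (\<Prod>z\<in>Z \<union> Z'. y - z)"
    using poly_eq_smult_prod_roots[of "Z \<union> Z'"] degree_ratb_bezoutian card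
    by (simp add: Z_def Z'_def)
  also have "(\<Prod>z\<in>Z \<union> Z'. y - z)
             = (\<Prod>k<m - 1. y - ys (int k)) * (\<Prod>k<m - 1. y - ys' (int k))"
    using disj by (simp add: prod.union_disjoint Z_def Z'_def prod.reindex inj)
  finally show ?thesis .
qed

lemma node_poly_xs'_product:
  assumes "\<forall>x. bq c x y = bqY2 c y * (x - a) * (x - b)"
  shows "bqY2 c y ^ m * (poly (node_poly xs' m) a * poly (node_poly xs' m) b)
         = (\<Prod>k<m. bqX2 c (xs' (int k)))
           * (\<Prod>k<m. y - ys' (int k - 1)) * (\<Prod>k<m. y - ys' (int k))"
proof -
  have factor: "bqY2 c y * ((a - xs' (int k)) * (b - xs' (int k)))
        = bqX2 c (xs' (int k)) * (y - ys' (int k - 1)) * (y - ys' (int k))" for k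
    using bq_at_xs'[of "int k" y] spec[OF assms, of "xs' (int k)"] by (simp add: algebra_simps)
  have "bqY2 c y ^ m * (poly (node_poly xs' m) a * poly (node_poly xs' m) b)
        = (\<Prod>k<m. bqY2 c y * ((a - xs' (int k)) * (b - xs' (int k))))"
    by (simp add: poly_node_poly prod.distrib)
  also have "\<dots> = (\<Prod>k<m. bqX2 c (xs' (int k)) * (y - ys' (int k - 1)) * (y - ys' (int k)))"
    by (simp only: factor)
  finally show ?thesis
    by (simp add: prod.distrib)
qed

lemma ratb_divided_difference_factored:
  assumes "m \<ge> 1" and Y: "bqY2 c y \<noteq> 0" and "a \<noteq> b"
    and fac: "\<forall>x. bq c x y = bqY2 c y * (x - a) * (x - b)"
    and "\<forall>k<m. a \<noteq> xs' (int k) \<and> b \<noteq> xs' (int k)"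
    and ny: "\<forall>k\<in>{-1..int m - 1}. y \<noteq> ys' k"
  shows "(ratb xs xs' m a - ratb xs xs' m b) / (a - b)
         = coeff (ratb_bezoutian c xs xs' m) (2 * (m - 1)) / (\<Prod>k<m. bqX2 c (xs' (int k)))
           * bqY2 c y * (\<Prod>k\<in>{0..int m - 2}. y - ys k)
           / (\<Prod>k\<in>{-1..int m - 1}. y - ys' k)"
proof -
  obtain n where m: "m = Suc n" using assms(1) by (cases m) auto
  define L where "L = coeff (ratb_bezoutian c xs xs' m) (2 * (m - 1))"
  define K where "K = (\<Prod>k<m. bqX2 c (xs' (int k)))"
  define A where "A = (\<Prod>k<n. y - ys (int k))"
  define B where "B = (\<Prod>k<n. y - ys' (int k))"
  define B' where "B' = (\<Prod>k<m. y - ys' (int k))"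
  have "K \<noteq> 0" "B \<noteq> 0" "B' \<noteq> 0" "y - ys' (- 1) \<noteq> 0"
    using bqX2_xs'_nonzero ny m by (auto simp: K_def B_def B'_def prod_zero_iff)
  have G: "poly (ratb_bezoutian c xs xs' m) y = L * (A * B)"
    using ratb_bezoutian_factor[of m y] by (simp add: m L_def A_def B_def)
  have Q: "bqY2 c y ^ m * (poly (node_poly xs' m) a * poly (node_poly xs' m) b)
           = K * ((y - ys' (- 1)) * B) * B'"
    using node_poly_xs'_product[OF fac, of m]
      prod_lessThan_Suc_int_shift[where n = n and g = "\<lambda>i. y - ys' i"]
    by (simp add: K_def B_def B'_def m del: prod.lessThan_Suc)
  have "(ratb xs xs' m a - ratb xs xs' m b) / (a - b)
        = L * (A * B) * bqY2 c y / (K * ((y - ys' (- 1)) * B) * B')"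
    unfolding ratb_divided_difference[OF fac assms(3) Y assms(5)] G Q ..
  also have "\<dots> = L / K * bqY2 c y * A / ((y - ys' (- 1)) * B')"
    using \<open>K \<noteq> 0\<close> \<open>B \<noteq> 0\<close> \<open>B' \<noteq> 0\<close> \<open>y - ys' (- 1) \<noteq> 0\<close>
    by (simp add: field_simps)
  finally show ?thesis
    unfolding prod_C_numerator[OF assms(1)] prod_C_denominator L_def K_def
    by (simp add: A_def B'_def m mult.assoc)
qed

lemma C_const_identity_exists: "m \<ge> 1 \<Longrightarrow> \<exists>C. C_const_identity c xs ys xs' ys' m C"
  unfolding C_const_identity_def by (blast intro: ratb_divided_difference_factored)

lemma C_const_identity_at_ys:
  assumes "C_const_identity c xs ys xs' ys' m C"
  shows "(ratb xs xs' m (xs n) - ratb xs xs' m (xs (n + 1))) / (xs n - xs (n + 1))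
         = C * bqY2 c (ys n) * (\<Prod>k\<in>{0..int m - 2}. ys n - ys k)
           / (\<Prod>k\<in>{-1..int m - 1}. ys n - ys' k)"
  using assms unfolding C_const_identity_def
  by (simp add: bqY2_ys_nonzero xs_consecutive_ne bq_at_ys xs_ne_xs' ys_ne_ys')

lemma C_const_identity_unique:
  assumes "m \<ge> 1"
    and "C_const_identity c xs ys xs' ys' m C1" "C_const_identity c xs ys xs' ys' m C2"
  shows "C1 = C2"
proof -
  obtain n where m: "m = Suc n" using assms by (cases m) auto
  let ?y = "ys (int n)"
  have "(\<Prod>k\<in>{0..int m - 2}. ?y - ys k) \<noteq> 0"
    and "(\<Prod>k\<in>{-1..int m - 1}. ?y - ys' k) \<noteq> 0"
    using inj_ys ys_ne_ys' by (auto simp: m prod_C_numerator prod_zero_iff dest: injD)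
  then show ?thesis
    using C_const_identity_at_ys[OF assms(2), of "int n"]
      C_const_identity_at_ys[OF assms(3), of "int n"] bqY2_ys_nonzero
    by simp
qed

lemma C_const_identity_C_const:
  "m \<ge> 1 \<Longrightarrow> C_const_identity c xs ys xs' ys' m (C_const c xs ys xs' ys' m)"
  unfolding C_const_eq_The
  by (rule theI') (blast intro: C_const_identity_exists C_const_identity_unique)

end


section \<open>Interpolation\<close>

lemma sum_newton_fractions:
  fixes y :: "'a::field" and u v :: "nat \<Rightarrow> 'a"
  assumes "\<forall>k<n. y \<noteq> v k"
  shows "(\<Sum>j<n. (u j - v j) * (\<Prod>k<j. y - u k) / (\<Prod>k<Suc j. y - v k))
         = 1 - (\<Prod>k<n. y - u k) / (\<Prod>k<n. y - v k)"
proof -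
  define U where "U j = (\<Prod>k<j. y - u k) / (\<Prod>k<j. y - v k)" for j
  have step: "(u j - v j) * (\<Prod>k<j. y - u k) / (\<Prod>k<Suc j. y - v k) = U j - U (Suc j)"
    if "j < n" for j
  proof -
    have "(\<Prod>k<j. y - v k) \<noteq> 0" "y - v j \<noteq> 0"
      using assms that by (simp_all add: prod_zero_iff)
    then show ?thesis
      by (simp add: U_def field_simps)
  qed
  have "(\<Sum>j<n. (u j - v j) * (\<Prod>k<j. y - u k) / (\<Prod>k<Suc j. y - v k))
        = (\<Sum>j<n. U j - U (Suc j))"
    by (rule sum.cong[OF refl], rule step) simp
  also have "\<dots> = U 0 - U n"
    by (rule sum_lessThan_telescope')
  also have "U 0 = 1"
    by (simp add: U_def)
  finally show ?thesis
    by (simp only: U_def)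
qed

lemma ratb_0 [simp]: "ratb xs xs' 0 x = 1"
  by (simp add: ratb_def)

lemma ratb_at_node: "n < m \<Longrightarrow> ratb xs xs' m (xs (int n)) = 0"
  by (auto simp: ratb_def prod_zero_iff)

context elliptic_pair
begin

lemma ratb_increment:
  assumes "m \<ge> 1"
  shows "ratb xs xs' m (xs (n + 1)) - ratb xs xs' m (xs n)
         = (xs (n + 1) - xs n) * bqY2 c (ys n) / (ys n - ys' (- 1))
           * (C_const c xs ys xs' ys' m
              * ((\<Prod>k<m - 1. ys n - ys (int k)) / (\<Prod>k<m. ys n - ys' (int k))))"
proof -
  let ?r = "ratb xs xs' m" and ?C = "C_const c xs ys xs' ys' m"
  have "(?r (xs n) - ?r (xs (n + 1))) / (xs n - xs (n + 1))
        = ?C * bqY2 c (ys n) * (\<Prod>k<m - 1. ys n - ys (int k))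
          / ((ys n - ys' (- 1)) * (\<Prod>k<m. ys n - ys' (int k)))"
    using C_const_identity_at_ys[OF C_const_identity_C_const[OF assms], of n]
    by (simp add: prod_C_numerator[OF assms] prod_C_denominator)
  moreover have "?r (xs (n + 1)) - ?r (xs n)
        = (xs (n + 1) - xs n) * ((?r (xs n) - ?r (xs (n + 1))) / (xs n - xs (n + 1)))"
    using xs_consecutive_ne[of n] by (simp add: field_simps)
  ultimately show ?thesis
    by (simp add: mult_ac)
qed

lemma interpolation_increment:
  assumes coeff: "\<And>m. m \<ge> 1 \<Longrightarrow>
      a m * C_const c xs ys xs' ys' m = ys (int m - 1) - ys' (int m - 1)"
  shows "(\<Sum>m\<le>Suc n. a m * (ratb xs xs' m (xs (int n + 1)) - ratb xs xs' m (xs (int n))))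
         = (xs (int n + 1) - xs (int n)) * bqY2 c (ys (int n)) / (ys (int n) - ys' (- 1))"
    (is "?lhs = ?D")
proof -
  let ?y = "ys (int n)"
  let ?dr = "\<lambda>m. ratb xs xs' m (xs (int n + 1)) - ratb xs xs' m (xs (int n))"
  let ?t = "\<lambda>j. (ys (int j) - ys' (int j))
                 * (\<Prod>k<j. ?y - ys (int k)) / (\<Prod>k<Suc j. ?y - ys' (int k))"
  have summand: "a (Suc j) * ?dr (Suc j) = ?D * ?t j" for j
  proof -
    have "a (Suc j) * ?dr (Suc j)
          = ?D * (a (Suc j) * C_const c xs ys xs' ys' (Suc j)
                  * ((\<Prod>k<j. ?y - ys (int k)) / (\<Prod>k<Suc j. ?y - ys' (int k))))"
      by (simp only: ratb_increment[of "Suc j" "int n"]) (simp add: mult_ac)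
    also have "a (Suc j) * C_const c xs ys xs' ys' (Suc j) = ys (int j) - ys' (int j)"
      using coeff[of "Suc j"] by simp
    finally show ?thesis
      by simp
  qed
  have "?lhs = (\<Sum>j<Suc n. a (Suc j) * ?dr (Suc j))"
    by (simp only: sum.atMost_Suc_shift lessThan_Suc_atMost) simp
  also have "\<dots> = ?D * (\<Sum>j<Suc n. ?t j)"
    by (simp only: summand sum_distrib_left)
  also have "(\<Sum>j<Suc n. ?t j)
             = 1 - (\<Prod>k<Suc n. ?y - ys (int k)) / (\<Prod>k<Suc n. ?y - ys' (int k))"
    by (rule sum_newton_fractions) (simp add: ys_ne_ys')
  also have "(\<Prod>k<Suc n. ?y - ys (int k)) = 0"
    by (simp add: prod_zero_iff)
  finally show ?thesis
    by simp
qed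

lemma partial_sum_interpolates:
  fixes f :: "complex \<Rightarrow> complex" and a :: "nat \<Rightarrow> complex"
  assumes Df: "\<And>n::nat. (f (xs (int n + 1)) - f (xs (int n))) / (xs (int n + 1) - xs (int n))
                = bqY2 c (ys (int n)) / (ys (int n) - ys' (- 1))"
    and a0: "a 0 = f (xs 0)"
    and coeff: "\<And>m. m \<ge> 1 \<Longrightarrow>
      a m * C_const c xs ys xs' ys' m = ys (int m - 1) - ys' (int m - 1)"
    and "n \<le> N"
  shows "(\<Sum>m\<le>N. a m * ratb xs xs' m (xs (int n))) = f (xs (int n))"
proof -
  define S where "S N x = (\<Sum>m\<le>N. a m * ratb xs xs' m x)" for N x
  have truncate: "S N (xs (int n)) = S n (xs (int n))" if "n \<le> N" for n N
    unfolding S_def by (rule sum.mono_neutral_right) (use that in \<open>auto simp: ratb_at_node\<close>)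
  have "S n (xs (int n)) = f (xs (int n))" for n
  proof (induction n)
    case 0
    then show ?case by (simp add: S_def a0)
  next
    case (Suc n)
    let ?a = "xs (int n)" and ?b = "xs (int n + 1)"
    have "S (Suc n) ?b - S (Suc n) ?a
          = (\<Sum>m\<le>Suc n. a m * (ratb xs xs' m ?b - ratb xs xs' m ?a))"
      by (simp add: S_def sum_subtractf right_diff_distrib)
    also have "\<dots> = (?b - ?a) * bqY2 c (ys (int n)) / (ys (int n) - ys' (- 1))"
      by (rule interpolation_increment[OF coeff])
    also have "\<dots> = f ?b - f ?a"
      using Df[of n] xs_consecutive_ne[of "int n"] by (simp add: field_simps)
    finally have "S (Suc n) ?b = S (Suc n) ?a + (f ?b - f ?a)"
      by (simp add: algebra_simps)
    also have "S (Suc n) ?a = f ?a"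
      using truncate[of n "Suc n"] Suc.IH by simp
    finally show ?case
      by (simp add: add.commute)
  qed
  then show ?thesis
    using truncate[OF \<open>n \<le> N\<close>] by (simp add: S_def)
qed

end

theorem mainTheorem9:
  fixes c :: "nat \<Rightarrow> nat \<Rightarrow> complex"
    and xs ys xs' ys' :: "int \<Rightarrow> complex"
    and f :: "complex \<Rightarrow> complex"
  assumes ell: "elliptic_seq c xs ys"
    and ell': "elliptic_seq c xs' ys'"
    and gp: "general_position c xs ys xs' ys'"
    and Df: "\<And>n::nat. (f (xs (int n + 1)) - f (xs (int n))) / (xs (int n + 1) - xs (int n))
                = bqY2 c (ys (int n)) / (ys (int n) - ys' (-1))"
    and Cnz: "\<And>m::nat. m \<ge> 1 \<Longrightarrow> C_const c xs ys xs' ys' m \<noteq> 0"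
  shows "\<forall>N::nat. \<forall>n\<le>N.
           (\<Sum>m\<le>N. (if m = 0 then f (xs 0)
                      else (ys (int m - 1) - ys' (int m - 1)) / C_const c xs ys xs' ys' m)
                     * ratb xs xs' m (xs (int n)))
           = f (xs (int n))"
proof -
  interpret elliptic_pair c xs ys xs' ys'
    using ell ell' gp by unfold_locales
  show ?thesis
    using partial_sum_interpolates[OF Df] Cnz by simp
qed

end
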